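(* Every cycle graph $C_n$ with $n>3$ vertices is a skeleton.
   Context: For simple graphs $G$ and $H$, $H$ is a skeletal of $G$ if there is a surjective map $\phi:V(G)\to V(H)$ such that for all distinct vertices $a,b$ of $G$: $a$ and $b$ are adjacent in $G$ if and only if $\phi(a)=\phi(b)$ or $\phi(a)$ and $\phi(b)$ are adjacent in $H$. A skeletal $H$ of $G$ under $\phi$ is proper if $|\phi^{-1}(v)|\ge 2$ for at least one vertex $v$ of $H$. A graph is a skeleton if it has no proper skeletal. *)

theory Defs
  imports Main
begin

definition simple_graph :: "'a set \<Rightarrow> ('a \<Rightarrow> 'a \<Rightarrow> bool) \<Rightarrow> bool" where
  "simple_graph V E \<longleftrightarrow> finite V \<and> (\<forall>x y. E x y \<longrightarrow> x \<in> V \<and> y \<in> V)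
     \<and> (\<forall>x y. E x y \<longrightarrow> E y x) \<and> (\<forall>x. \<not> E x x)"

definition skeletal_via ::
  "'a set \<Rightarrow> ('a \<Rightarrow> 'a \<Rightarrow> bool) \<Rightarrow> 'b set \<Rightarrow> ('b \<Rightarrow> 'b \<Rightarrow> bool) \<Rightarrow> ('a \<Rightarrow> 'b) \<Rightarrow> bool" where
  "skeletal_via V E W F \<phi> \<longleftrightarrow> simple_graph W F \<and> \<phi> ` V = W \<and>
     (\<forall>a\<in>V. \<forall>b\<in>V. a \<noteq> b \<longrightarrow> (E a b \<longleftrightarrow> \<phi> a = \<phi> b \<or> F (\<phi> a) (\<phi> b)))"

definition proper_skeletal_via ::
  "'a set \<Rightarrow> ('a \<Rightarrow> 'a \<Rightarrow> bool) \<Rightarrow> 'b set \<Rightarrow> ('b \<Rightarrow> 'b \<Rightarrow> bool) \<Rightarrow> ('a \<Rightarrow> 'b) \<Rightarrow> bool" where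
  "proper_skeletal_via V E W F \<phi> \<longleftrightarrow> skeletal_via V E W F \<phi> \<and>
     (\<exists>v\<in>W. card {a\<in>V. \<phi> a = v} \<ge> 2)"

text \<open>Since a skeletal has at most
  |V| vertices, it suffices (up to isomorphism) to let skeletals range over graphs whose
  vertex type is the vertex type of G.\<close>
definition skeleton :: "'a set \<Rightarrow> ('a \<Rightarrow> 'a \<Rightarrow> bool) \<Rightarrow> bool" where
  "skeleton V E \<longleftrightarrow> \<not> (\<exists>(W::'a set) F \<phi>. proper_skeletal_via V E W F \<phi>)"

definition cycle_adj :: "nat \<Rightarrow> nat \<Rightarrow> nat \<Rightarrow> bool" where
  "cycle_adj n i j \<longleftrightarrow> i < n \<and> j < n \<and> i \<noteq> j \<and> (j = (i + 1) mod n \<or> i = (j + 1) mod n)"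

end

theory Submission
  imports Defs
begin

text \<open>Two distinct vertices identified by a skeletal map are adjacent and have the same
  neighbours outside themselves, i.e. they are closed twins. A cycle of length at least
  four has no closed twins: each end of an edge has a neighbour that is not adjacent to
  the other end.\<close>

definition closed_twins :: "'a set \<Rightarrow> ('a \<Rightarrow> 'a \<Rightarrow> bool) \<Rightarrow> 'a \<Rightarrow> 'a \<Rightarrow> bool" where
  "closed_twins V E a b \<longleftrightarrow> a \<in> V \<and> b \<in> V \<and> a \<noteq> b \<and> E a b \<and>
     (\<forall>c \<in> V - {a, b}. E a c \<longleftrightarrow> E b c)"

lemma skeletal_via_identifies_closed_twins:
  assumes "skeletal_via V E W F \<phi>" and "a \<in> V" "b \<in> V" "a \<noteq> b" "\<phi> a = \<phi> b"
  shows "closed_twins V E a b"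
  using assms unfolding skeletal_via_def closed_twins_def by auto

lemma proper_skeletal_via_closed_twins:
  assumes "proper_skeletal_via V E W F \<phi>"
  obtains a b where "closed_twins V E a b"
proof -
  from assms obtain v where "card {a \<in> V. \<phi> a = v} \<ge> 2"
    unfolding proper_skeletal_via_def by blast
  moreover have "finite {a \<in> V. \<phi> a = v}"
    using calculation by (intro card_ge_0_finite) linarith
  ultimately obtain a b where "a \<in> V" "b \<in> V" "a \<noteq> b" "\<phi> a = v" "\<phi> b = v"
    using card_le_Suc0_iff_eq[of "{a \<in> V. \<phi> a = v}"] by fastforce
  with assms show thesis
    using that skeletal_via_identifies_closed_twins
    unfolding proper_skeletal_via_def by metis
qed

lemma skeleton_if_no_closed_twins:
  assumes "\<And>a b. \<not> closed_twins V E a b"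
  shows "skeleton V E"
  using assms proper_skeletal_via_closed_twins unfolding skeleton_def by metis

lemma cycle_adj_iff:
  assumes "n > 3"
  shows "cycle_adj n i j \<longleftrightarrow> i < n \<and> j < n \<and>
     (j = i + 1 \<or> i = j + 1 \<or> (i = 0 \<and> j = n - 1) \<or> (j = 0 \<and> i = n - 1))"
proof (cases "i < n \<and> j < n")
  case True
  then have "(i + 1) mod n = (if i + 1 = n then 0 else i + 1)"
    and "(j + 1) mod n = (if j + 1 = n then 0 else j + 1)"
    by auto
  with assms True show ?thesis
    unfolding cycle_adj_def by auto
next
  case False
  then show ?thesis unfolding cycle_adj_def by auto
qed

lemma cycle_adj_private_neighbour:
  assumes "n > 3" "cycle_adj n a b"
  obtains c where "c < n" "c \<noteq> b" "cycle_adj n a c" "\<not> cycle_adj n b c"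
proof (cases "b = a + 1 \<or> (a = n - 1 \<and> b = 0)")
  case True
  show thesis
    by (rule that[of "if a = 0 then n - 1 else a - 1"])
      (use True assms in \<open>auto simp: cycle_adj_iff[OF assms(1)]\<close>)
next
  case False
  show thesis
    by (rule that[of "if a = n - 1 then 0 else a + 1"])
      (use False assms in \<open>auto simp: cycle_adj_iff[OF assms(1)]\<close>)
qed

lemma cycle_no_closed_twins:
  assumes "n > 3"
  shows "\<not> closed_twins {0..<n} (cycle_adj n) a b"
proof
  assume twins: "closed_twins {0..<n} (cycle_adj n) a b"
  then have "cycle_adj n a b" unfolding closed_twins_def by blast
  with assms obtain c where "c < n" "c \<noteq> b" "cycle_adj n a c" "\<not> cycle_adj n b c"
    by (rule cycle_adj_private_neighbour)
  moreover have "c \<noteq> a" using \<open>cycle_adj n a c\<close> unfolding cycle_adj_def by blast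
  ultimately show False using twins unfolding closed_twins_def by auto
qed

theorem mainTheorem5:
  fixes n :: nat
  assumes "n > 3"
  shows "skeleton {0..<n} (cycle_adj n)"
  using cycle_no_closed_twins[OF assms] by (rule skeleton_if_no_closed_twins)

end
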